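(* Let $K$ be a field of characteristic $\neq 2$, $n\ge1$, and let $\mathcal C$ be an EACP over $K$ with natural basis $\{h_1,\dots,h_n,r\}$ and structural constants $a_{ij},b_i$. Suppose $\sum_{j=1}^n a_{ij}a_{jk}=0$ and $b_i=0$ for all $i,k=1,\dots,n$. Then $(xy)z=0$ and $x(yz)=0$ for all $x,y,z\in\mathcal C$.
   Context: An EACP over a field $K$ (characteristic $\neq 2$) is a $K$-algebra $\mathcal C$ with a basis $\{h_1,\dots,h_n,r\}$ (called a natural basis) whose multiplication is determined by bilinearity from $$h_ir=rh_i=\tfrac12\Big(\sum_{j=1}^n a_{ij}h_j+b_ir\Big),\qquad h_ih_j=0\ (i,j=1,\dots,n),\qquad rr=0,$$ for some constants $a_{ij},b_i\in K$. *)

theory Defs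
  imports Main "HOL.Vector_Spaces"
begin

definition is_algebra :: "('k::field \<Rightarrow> 'v::ab_group_add \<Rightarrow> 'v) \<Rightarrow> ('v \<Rightarrow> 'v \<Rightarrow> 'v) \<Rightarrow> bool" where
  "is_algebra scale mult \<longleftrightarrow>
     vector_space scale \<and>
     (\<forall>x y z. mult (x + y) z = mult x z + mult y z) \<and>
     (\<forall>x y z. mult x (y + z) = mult x y + mult x z) \<and>
     (\<forall>c x y. mult (scale c x) y = scale c (mult x y)) \<and>
     (\<forall>c x y. mult x (scale c y) = scale c (mult x y))"

definition is_EACP ::
  "('k::field \<Rightarrow> 'v::ab_group_add \<Rightarrow> 'v) \<Rightarrow> ('v \<Rightarrow> 'v \<Rightarrow> 'v) \<Rightarrow> nat \<Rightarrow> (nat \<Rightarrow> 'v) \<Rightarrow> 'v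
    \<Rightarrow> (nat \<Rightarrow> nat \<Rightarrow> 'k) \<Rightarrow> (nat \<Rightarrow> 'k) \<Rightarrow> bool" where
  "is_EACP scale mult n h r a b \<longleftrightarrow>
     is_algebra scale mult \<and>
     inj_on h {1..n} \<and> r \<notin> h ` {1..n} \<and>
     module.independent scale (insert r (h ` {1..n})) \<and>
     module.span scale (insert r (h ` {1..n})) = UNIV \<and>
     (\<forall>i\<in>{1..n}. mult (h i) r =
         scale (1/2) ((\<Sum>j=1..n. scale (a i j) (h j)) + scale (b i) r) \<and>
       mult r (h i) =
         scale (1/2) ((\<Sum>j=1..n. scale (a i j) (h j)) + scale (b i) r)) \<and>
     (\<forall>i\<in>{1..n}. \<forall>j\<in>{1..n}. mult (h i) (h j) = 0) \<and>
     mult r r = 0"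

end

theory Submission
  imports Defs
begin

text \<open>Write \<open>c\<^sub>i = h\<^sub>i r = r h\<^sub>i\<close>; since \<open>b = 0\<close> every product of two basis vectors is
  \<open>0\<close> or some \<open>c\<^sub>i\<close>, so \<open>\<C>\<^sup>2\<close> is spanned by the \<open>c\<^sub>i\<close>. Each \<open>c\<^sub>i\<close> is a combination of the
  \<open>h\<^sub>j\<close>, hence killed by every \<open>h\<^sub>k\<close>, and \<open>r c\<^sub>i = c\<^sub>i r = \<Sum>\<^sub>j a\<^sub>i\<^sub>j c\<^sub>j\<close> is, up to the factor
  \<open>1/4\<close>, the \<open>i\<close>-th row of \<open>A\<^sup>2 = 0\<close> applied to \<open>(h\<^sub>1,\<dots>,h\<^sub>n)\<close>. So \<open>\<C>\<^sup>2\<close> lies in the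
  two-sided annihilator of \<open>\<C>\<close>, which is exactly the claim.\<close>

locale bilinear_algebra = vector_space scale
  for scale :: "'k::field \<Rightarrow> 'v::ab_group_add \<Rightarrow> 'v" +
  fixes mult :: "'v \<Rightarrow> 'v \<Rightarrow> 'v"
  assumes mult_add_left: "mult (x + y) z = mult x z + mult y z"
    and mult_add_right: "mult x (y + z) = mult x y + mult x z"
    and mult_scale_left: "mult (scale c x) y = scale c (mult x y)"
    and mult_scale_right: "mult x (scale c y) = scale c (mult x y)"

lemma is_algebra_iff_bilinear_algebra:
  "is_algebra scale mult \<longleftrightarrow> bilinear_algebra scale mult"
  unfolding is_algebra_def bilinear_algebra_def bilinear_algebra_axioms_def by blast

context bilinear_algebra
begin

lemma mult_zero_left [simp]: "mult 0 y = 0"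
  by (metis mult_add_left add_cancel_right_right add_0)

lemma mult_zero_right [simp]: "mult x 0 = 0"
  by (metis mult_add_right add_cancel_right_right add_0)

lemma mult_sum_left: "mult (sum f A) y = (\<Sum>j\<in>A. mult (f j) y)"
  by (induct A rule: infinite_finite_induct) (simp_all add: mult_add_left)

lemma mult_sum_right: "mult x (sum f A) = (\<Sum>j\<in>A. mult x (f j))"
  by (induct A rule: infinite_finite_induct) (simp_all add: mult_add_right)

definition annihilator :: "'v set" where
  "annihilator = {v. \<forall>u. mult u v = 0 \<and> mult v u = 0}"

lemma subspace_annihilator: "subspace annihilator"
  unfolding annihilator_def
  by (rule subspaceI) (auto simp: mult_add_left mult_add_right mult_scale_left mult_scale_right)

lemma mem_annihilator_if_spanning:
  assumes "span B = UNIV" and "\<And>u. u \<in> B \<Longrightarrow> mult u v = 0 \<and> mult v u = 0"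
  shows "v \<in> annihilator"
proof -
  have "subspace {u. mult u v = 0 \<and> mult v u = 0}"
    by (rule subspaceI) (auto simp: mult_add_left mult_add_right mult_scale_left mult_scale_right)
  then have "mult u v = 0 \<and> mult v u = 0" for u
    using span_induct[of u B] assms by auto
  then show ?thesis
    unfolding annihilator_def by blast
qed

lemma mult_mem_subspace_if_spanning:
  assumes span_B: "span B = UNIV" and S: "subspace S"
    and B: "\<And>x y. x \<in> B \<Longrightarrow> y \<in> B \<Longrightarrow> mult x y \<in> S"
  shows "mult x y \<in> S"
proof -
  have right: "mult x y \<in> S" if "x \<in> B" for x y
  proof (rule span_induct[where P = "\<lambda>y. mult x y \<in> S"])
    show "y \<in> span B" using span_B by simp
    show "subspace {y. mult x y \<in> S}"
      using S by (auto intro!: subspaceI simp: mult_add_right mult_scale_right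
          subspace_0 subspace_add subspace_scale)
  qed (use B that in auto)
  show ?thesis
  proof (rule span_induct[where P = "\<lambda>x. \<forall>y. mult x y \<in> S", rule_format])
    show "x \<in> span B" using span_B by simp
    show "subspace {x. \<forall>y. mult x y \<in> S}"
      using S by (auto intro!: subspaceI simp: mult_add_left mult_scale_left
          subspace_0 subspace_add subspace_scale)
  qed (use right in auto)
qed

lemma products_annihilated_imp_triple_products_zero:
  assumes "\<And>x y. mult x y \<in> annihilator"
  shows "mult (mult x y) z = 0 \<and> mult x (mult y z) = 0"
  using assms unfolding annihilator_def by blast

end

lemma (in vector_space) sum_scale_sum_scale:
  "(\<Sum>j\<in>J. scale (a i j) (\<Sum>k\<in>K. scale (a j k) (v k)))
     = (\<Sum>k\<in>K. scale (\<Sum>j\<in>J. a i j * a j k) (v k))"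
  by (simp add: scale_sum_right scale_sum_left sum.swap[of _ J K])

lemma (in bilinear_algebra) mult_square_zero_combination:
  assumes hr: "\<And>i. i \<in> {1..n} \<Longrightarrow> mult (h i) r = c i \<and> mult r (h i) = c i"
    and c: "\<And>i. i \<in> {1..n} \<Longrightarrow> c i = (\<Sum>j=1..n. scale (a i j) (h j))"
    and aa: "\<And>i k. i \<in> {1..n} \<Longrightarrow> k \<in> {1..n} \<Longrightarrow> (\<Sum>j=1..n. a i j * a j k) = 0"
    and i: "i \<in> {1..n}"
  shows "mult r (c i) = 0 \<and> mult (c i) r = 0"
proof -
  have "(\<Sum>j=1..n. scale (a i j) (c j)) = (\<Sum>j=1..n. scale (a i j) (\<Sum>k=1..n. scale (a j k) (h k)))"
    using c by (intro sum.cong) auto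
  also have "\<dots> = 0"
    using aa i by (simp add: sum_scale_sum_scale)
  finally have combination_zero: "(\<Sum>j=1..n. scale (a i j) (c j)) = 0" .
  have "mult r (c i) = (\<Sum>j=1..n. scale (a i j) (c j))"
    using c[OF i] hr by (simp add: mult_sum_right mult_scale_right)
  moreover have "mult (c i) r = (\<Sum>j=1..n. scale (a i j) (c j))"
    using c[OF i] hr by (simp add: mult_sum_left mult_scale_left)
  ultimately show ?thesis
    using combination_zero by simp
qed

theorem mainTheorem2:
  fixes scale :: "'k::field \<Rightarrow> 'v::ab_group_add \<Rightarrow> 'v"
    and mult :: "'v \<Rightarrow> 'v \<Rightarrow> 'v"
    and n :: nat and h :: "nat \<Rightarrow> 'v" and r :: 'v
    and a :: "nat \<Rightarrow> nat \<Rightarrow> 'k" and b :: "nat \<Rightarrow> 'k"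
  assumes char: "(2::'k) \<noteq> 0"
    and n: "n \<ge> 1"
    and C: "is_EACP scale mult n h r a b"
    and aa: "\<forall>i\<in>{1..n}. \<forall>k\<in>{1..n}. (\<Sum>j=1..n. a i j * a j k) = 0"
    and b0: "\<forall>i\<in>{1..n}. b i = 0"
  shows "\<forall>x y z. mult (mult x y) z = 0 \<and> mult x (mult y z) = 0"
proof -
  interpret bilinear_algebra scale mult
    using C by (simp add: is_EACP_def is_algebra_iff_bilinear_algebra)
  define B where "B = insert r (h ` {1..n})"
  define c where "c i = (\<Sum>j=1..n. scale (a i j / 2) (h j))" for i
  have span_B: "span B = UNIV"
    using C unfolding is_EACP_def B_def by blast
  have hh: "\<And>i j. i \<in> {1..n} \<Longrightarrow> j \<in> {1..n} \<Longrightarrow> mult (h i) (h j) = 0"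
    and rr: "mult r r = 0"
    using C unfolding is_EACP_def by blast+
  have hr: "\<And>i. i \<in> {1..n} \<Longrightarrow> mult (h i) r = c i \<and> mult r (h i) = c i"
    using C b0 by (simp add: is_EACP_def c_def scale_sum_right)
  have "(\<Sum>j=1..n. a i j / 2 * (a j k / 2)) = 0" if "i \<in> {1..n}" "k \<in> {1..n}" for i k
    using aa that by (simp add: sum_divide_distrib[symmetric])
  from mult_square_zero_combination[where a = "\<lambda>i j. a i j / 2", OF hr c_def this]
  have rc: "mult r (c i) = 0 \<and> mult (c i) r = 0" if "i \<in> {1..n}" for i
    using that by blast
  have hc: "mult (h k) (c i) = 0 \<and> mult (c i) (h k) = 0" if "k \<in> {1..n}" for i k
    using hh that by (simp add: c_def mult_sum_left mult_sum_right mult_scale_left mult_scale_right)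
  have "c i \<in> annihilator" if "i \<in> {1..n}" for i
    using rc[OF that] hc by (intro mem_annihilator_if_spanning[OF span_B]) (auto simp: B_def)
  then have "mult u v \<in> annihilator" if "u \<in> B" "v \<in> B" for u v
    using that hh hr rr subspace_0[OF subspace_annihilator] by (auto simp: B_def)
  then have "mult x y \<in> annihilator" for x y
    by (rule mult_mem_subspace_if_spanning[OF span_B subspace_annihilator])
  then show ?thesis
    using products_annihilated_imp_triple_products_zero by blast
qed

end
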